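(* Let $\alpha\in\mathbb{Q}(i)\setminus\mathbb{R}$ with $|\alpha|>1$, with minimal primitive polynomial $P_\alpha(X)=a_2X^2+a_1X+a_0$ ($a_0,a_1,a_2\in\mathbb{Z}$ coprime, $a_2>0$, $P_\alpha(\alpha)=0$), $\mathcal{D}=\{0,\ldots,|a_0|-1\}$ and $\Lambda_\alpha=\mathbb{Z}[\alpha]\cap\alpha^{-1}\mathbb{Z}[\alpha^{-1}]$, and assume $\alpha$ has the finiteness property in $\Lambda_\alpha$. For $k\ge0$ let $L_\alpha^k$ be the set of words $d_{k-1}\ldots d_0\in\mathcal{D}^k$ such that $\sum_{j=l}^{k-1}d_j\alpha^{j-l}\in\Lambda_\alpha$ for every $0\le l\le k-1$ (i.e. integer $\alpha$-expansions of length $k$, leading zeros allowed). Then $$\#L_\alpha^k\le\left\lceil\frac{|\mathcal{D}|}{a_2}\right\rceil^k.$$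
   Context: For $x\in\Lambda_\alpha$ there is a unique $d\in\mathcal{D}$ with $(x-d)/\alpha\in\Lambda_\alpha$, and $T_\alpha(x)=(x-d)/\alpha$; $\alpha$ has the finiteness property in $\Lambda_\alpha$ if for every $N\in\Lambda_\alpha$ the orbit under $T_\alpha$ reaches $0$. *)

theory Defs
  imports Complex_Main
begin

definition Zpoly :: "complex \<Rightarrow> complex set" where
  "Zpoly a = {z. \<exists>n (c :: nat \<Rightarrow> int). z = (\<Sum>j<n. of_int (c j) * a ^ j)}"

definition Lambda :: "complex \<Rightarrow> complex set" where
  "Lambda a = Zpoly a \<inter> (\<lambda>z. inverse a * z) ` Zpoly (inverse a)"

definition digits :: "int \<Rightarrow> int set" where
  "digits a0 = {0 .. \<bar>a0\<bar> - 1}"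

definition Tmap :: "complex \<Rightarrow> int \<Rightarrow> complex \<Rightarrow> complex" where
  "Tmap a a0 x = (let d = (THE d. d \<in> digits a0 \<and> (x - of_int d) / a \<in> Lambda a)
                  in (x - of_int d) / a)"

definition finiteness_property :: "complex \<Rightarrow> int \<Rightarrow> bool" where
  "finiteness_property a a0 \<longleftrightarrow> (\<forall>N \<in> Lambda a. \<exists>n. (Tmap a a0 ^^ n) N = 0)"

text \<open>Words \<open>d\<^sub>k\<^sub>-\<^sub>1\<dots>d\<^sub>0\<close>, represented as lists \<open>ds\<close> with \<open>ds ! j = d\<^sub>j\<close>.\<close>
definition Lwords :: "complex \<Rightarrow> int \<Rightarrow> nat \<Rightarrow> int list set" where
  "Lwords a a0 k = {ds. length ds = k \<and> set ds \<subseteq> digits a0 \<and>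
     (\<forall>l < k. (\<Sum>j = l..k-1. of_int (ds ! j) * a ^ (j - l)) \<in> Lambda a)}"

end

theory Submission
  imports Defs "HOL-Computational_Algebra.Polynomial_Factorial"
begin

text \<open>
  If two digits \<open>d, d'\<close> can both precede the same tail \<open>y\<close>, that is, \<open>d + \<alpha>y\<close> and
  \<open>d' + \<alpha>y\<close> lie in \<open>\<Lambda>\<^sub>\<alpha>\<close>, then \<open>d - d' \<in> \<alpha>\<^sup>-\<^sup>1\<int>[\<alpha>\<^sup>-\<^sup>1]\<close>. Clearing denominators,
  \<open>\<alpha>\<close> is a root of an integer polynomial with leading coefficient \<open>d - d'\<close>; since the
  primitive quadratic \<open>P\<^sub>\<alpha>\<close> has the non-real root \<open>\<alpha>\<close>, Gauss's lemma makes it divide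
  that polynomial, so \<open>a\<^sub>2\<close> divides \<open>d - d'\<close>. Hence at most \<open>\<lceil>|\<D>|/a\<^sub>2\<rceil>\<close> digits
  extend any given word, and the bound follows by induction on \<open>k\<close>.
\<close>

lemma map_poly_of_int_add:
  "map_poly (of_int :: int \<Rightarrow> 'a::ring_1) (p + q) = map_poly of_int p + map_poly of_int q"
  by (rule poly_eqI) (simp add: coeff_map_poly)

lemma map_poly_of_int_diff:
  "map_poly (of_int :: int \<Rightarrow> 'a::ring_1) (p - q) = map_poly of_int p - map_poly of_int q"
  by (rule poly_eqI) (simp add: coeff_map_poly)

lemma map_poly_of_int_mult:
  "map_poly (of_int :: int \<Rightarrow> 'a::comm_ring_1) (p * q) = map_poly of_int p * map_poly of_int q"
  by (rule poly_eqI) (simp add: coeff_map_poly coeff_mult of_int_sum)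

lemma map_poly_of_int_monom:
  "map_poly (of_int :: int \<Rightarrow> 'a::ring_1) (monom c n) = monom (of_int c) n"
  by (rule poly_eqI) (simp add: coeff_map_poly coeff_monom)

lemma map_poly_of_int_reflect_poly:
  "map_poly (of_int :: int \<Rightarrow> 'a::ring_char_0) (reflect_poly p) = reflect_poly (map_poly of_int p)"
  by (rule poly_eqI) (simp add: coeff_map_poly coeff_reflect_poly degree_map_poly)

lemma content_1_dvd_smult_cancel:
  fixes P R :: "int poly"
  assumes "content P = 1" "P dvd smult a R" "a \<noteq> 0"
  shows "P dvd R"
  using assms by (metis fract_poly_dvd fract_poly_dvdD fract_poly_smult dvd_smult_cancel to_fract_eq_0_iff)

lemma int_poly_linear_nonreal_root_eq_0:
  fixes r :: "int poly" and \<alpha> :: complex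
  assumes "Im \<alpha> \<noteq> 0" "degree r \<le> 1" "poly (map_poly of_int r) \<alpha> = 0"
  shows "r = 0"
proof -
  have r: "r = [:coeff r 0, coeff r 1:]"
    using assms(2) by (auto simp: poly_eq_iff coeff_pCons split: nat.split intro: coeff_eq_0)
  have root: "of_int (coeff r 0) + of_int (coeff r 1) * \<alpha> = 0"
    using assms(3) by (subst (asm) r) (simp add: map_poly_pCons algebra_simps)
  hence "Im (of_int (coeff r 0) + of_int (coeff r 1) * \<alpha>) = 0" by simp
  hence "coeff r 1 = 0" using assms(1) by simp
  with root have "coeff r 0 = 0" by simp
  with \<open>coeff r 1 = 0\<close> show ?thesis by (subst r) simp
qed

lemma primitive_quadratic_dvd_if_nonreal_root:
  fixes P R :: "int poly" and \<alpha> :: complex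
  assumes "content P = 1" "degree P = 2" "Im \<alpha> \<noteq> 0"
    and "poly (map_poly of_int P) \<alpha> = 0" "poly (map_poly of_int R) \<alpha> = 0"
  shows "P dvd R"
proof -
  have "P \<noteq> 0" using assms(2) by auto
  then obtain a q where "a \<noteq> 0" and division: "smult a R = P * q + pseudo_mod R P"
    using pseudo_mod(1) by blast
  have "poly (map_poly of_int (smult a R)) \<alpha> = 0"
    using assms(5) by (simp add: map_poly_smult)
  hence "poly (map_poly of_int (pseudo_mod R P)) \<alpha> = 0"
    using assms(4) by (simp add: division map_poly_of_int_add map_poly_of_int_mult)
  moreover have "degree (pseudo_mod R P) \<le> 1"
    using pseudo_mod(2)[OF \<open>P \<noteq> 0\<close>, of R] assms(2) by fastforce
  ultimately have "pseudo_mod R P = 0"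
    using int_poly_linear_nonreal_root_eq_0[OF assms(3)] by blast
  hence "P dvd smult a R" by (simp add: division)
  thus ?thesis using content_1_dvd_smult_cancel assms(1) \<open>a \<noteq> 0\<close> by blast
qed

lemma lead_coeff_dvd_if_nonreal_root:
  fixes P R :: "int poly" and \<alpha> :: complex
  assumes "content P = 1" "degree P = 2" "Im \<alpha> \<noteq> 0"
    and "poly (map_poly of_int P) \<alpha> = 0" "poly (map_poly of_int R) \<alpha> = 0"
  shows "lead_coeff P dvd lead_coeff R"
proof -
  obtain S where "R = P * S" using primitive_quadratic_dvd_if_nonreal_root[OF assms] by blast
  thus ?thesis by (simp add: lead_coeff_mult)
qed

lemma Zpoly_eq_range_poly: "Zpoly a = range (\<lambda>p. poly (map_poly of_int p) a)"
proof (intro equalityI subsetI)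
  fix z assume "z \<in> Zpoly a"
  then obtain n c where z: "z = (\<Sum>j<n. of_int (c j) * a ^ j)" by (auto simp: Zpoly_def)
  have "z = poly (\<Sum>j<n. monom (of_int (c j)) j) a"
    by (simp add: z poly_sum poly_monom)
  also have "(\<Sum>j<n. monom (of_int (c j)) j) = map_poly of_int (\<Sum>j<n. monom (c j) j)"
    by (rule poly_eqI) (simp add: coeff_map_poly coeff_sum coeff_monom of_int_sum if_distrib cong: if_cong)
  finally show "z \<in> range (\<lambda>p. poly (map_poly of_int p) a)" by blast
next
  fix z assume "z \<in> range (\<lambda>p. poly (map_poly of_int p) a)"
  then obtain p where "z = poly (map_poly of_int p) a" by blast
  hence "z = (\<Sum>j<Suc (degree p). of_int (coeff p j) * a ^ j)"
    by (simp add: poly_altdef degree_map_poly coeff_map_poly lessThan_Suc_atMost)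
  thus "z \<in> Zpoly a" unfolding Zpoly_def by blast
qed

lemma root_with_lead_coeff_if_int_mem_inverse_Zpoly:
  fixes \<alpha> :: complex
  assumes "\<alpha> \<noteq> 0" "of_int n \<in> (\<lambda>z. inverse \<alpha> * z) ` Zpoly (inverse \<alpha>)"
  shows "\<exists>R. lead_coeff R = n \<and> poly (map_poly of_int R) \<alpha> = 0"
proof (cases "n = 0")
  case True
  thus ?thesis by (intro exI[of _ 0]) simp
next
  case False
  obtain C where C: "of_int n = inverse \<alpha> * poly (map_poly of_int C) (inverse \<alpha>)"
    using assms(2) by (auto simp: Zpoly_eq_range_poly)
  \<comment> \<open>multiplying by \<open>\<alpha>\<^bsup>deg C + 1\<^esup>\<close> turns \<open>C(\<alpha>\<^sup>-\<^sup>1)\<close> into the reflected polynomial at \<open>\<alpha>\<close>\<close>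
  define R where "R = monom n (Suc (degree C)) - reflect_poly C"
  have "of_int n * \<alpha> ^ Suc (degree C) = \<alpha> ^ degree C * poly (map_poly of_int C) (inverse \<alpha>)"
    using assms(1) by (simp add: C field_simps)
  hence "poly (map_poly of_int R) \<alpha> = 0"
    using assms(1) by (simp add: R_def map_poly_of_int_diff map_poly_of_int_monom
        map_poly_of_int_reflect_poly poly_reflect_poly_nz poly_monom degree_map_poly)
  moreover have "lead_coeff R = n"
  proof -
    have "coeff R i = (if i = Suc (degree C) then n else 0)" if "i \<ge> Suc (degree C)" for i
      using that by (simp add: R_def coeff_monom coeff_reflect_poly)
    hence "degree R = Suc (degree C)"
      using False by (intro order.antisym degree_le le_degree) auto
    thus ?thesis by (simp add: R_def coeff_reflect_poly)
  qed
  ultimately show ?thesis by blast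
qed

lemma Lambda_digit_diff_dvd:
  fixes \<alpha> y :: complex and a0 a1 a2 d d' :: int
  assumes "Im \<alpha> \<noteq> 0" "a2 \<noteq> 0" "gcd a0 (gcd a1 a2) = 1"
    and "of_int a2 * \<alpha>^2 + of_int a1 * \<alpha> + of_int a0 = 0"
    and "of_int d + \<alpha> * y \<in> Lambda \<alpha>" "of_int d' + \<alpha> * y \<in> Lambda \<alpha>"
  shows "a2 dvd d - d'"
proof -
  have "\<alpha> \<noteq> 0" using assms(1) by auto
  obtain C C' where
    C: "of_int d + \<alpha> * y = inverse \<alpha> * poly (map_poly of_int C) (inverse \<alpha>)" and
    C': "of_int d' + \<alpha> * y = inverse \<alpha> * poly (map_poly of_int C') (inverse \<alpha>)"
    using assms(5,6) by (auto simp: Lambda_def Zpoly_eq_range_poly)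
  have "of_int (d - d') = inverse \<alpha> * poly (map_poly of_int (C - C')) (inverse \<alpha>)"
    by (simp add: map_poly_of_int_diff right_diff_distrib flip: C C')
  hence "of_int (d - d') \<in> (\<lambda>z. inverse \<alpha> * z) ` Zpoly (inverse \<alpha>)"
    by (auto simp: Zpoly_eq_range_poly)
  then obtain R where R: "lead_coeff R = d - d'" "poly (map_poly of_int R) \<alpha> = 0"
    using root_with_lead_coeff_if_int_mem_inverse_Zpoly \<open>\<alpha> \<noteq> 0\<close> by blast
  define P where "P = [:a0, a1, a2:]"
  have "content P = 1" "degree P = 2" "lead_coeff P = a2"
    using assms(2,3) by (simp_all add: P_def content_def cCons_def ac_simps)
  moreover have "poly (map_poly of_int P) \<alpha> = 0"
    using assms(4) by (simp add: P_def map_poly_pCons algebra_simps power2_eq_square)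
  ultimately show ?thesis
    using lead_coeff_dvd_if_nonreal_root[OF _ _ assms(1) _ R(2)] R(1) by metis
qed

lemma card_pairwise_congruent_le:
  fixes S :: "int set" and N m :: int
  assumes "S \<subseteq> {0..<N}" "m > 0" "\<And>x y. x \<in> S \<Longrightarrow> y \<in> S \<Longrightarrow> m dvd x - y"
  shows "card S \<le> nat \<lceil>real_of_int N / real_of_int m\<rceil>"
proof -
  have "inj_on (\<lambda>x. x div m) S"
  proof (rule inj_onI)
    fix x y assume "x \<in> S" "y \<in> S" "x div m = y div m"
    moreover from \<open>x \<in> S\<close> \<open>y \<in> S\<close> have "x mod m = y mod m"
      using assms(3) by (simp add: mod_eq_dvd_iff)
    ultimately show "x = y" by (metis div_mult_mod_eq)
  qed
  moreover have "(\<lambda>x. x div m) ` S \<subseteq> {0..<\<lceil>real_of_int N / real_of_int m\<rceil>}"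
  proof (rule image_subsetI)
    fix x assume "x \<in> S"
    hence "0 \<le> x" "x < N" using assms(1) by auto
    have "real_of_int (x div m) \<le> of_int x / of_int m"
      by (metis floor_divide_of_int_eq of_int_floor_le)
    also have "\<dots> < real_of_int N / real_of_int m"
      using \<open>x < N\<close> assms(2) by (simp add: divide_strict_right_mono)
    finally show "x div m \<in> {0..<\<lceil>real_of_int N / real_of_int m\<rceil>}"
      using \<open>0 \<le> x\<close> assms(2) by (simp add: less_ceiling_iff pos_imp_zdiv_nonneg_iff)
  qed
  ultimately show ?thesis
    using card_inj_on_le[of "\<lambda>x. x div m" S "{0..<\<lceil>real_of_int N / real_of_int m\<rceil>}"] by simp
qed

definition word_value :: "complex \<Rightarrow> int list \<Rightarrow> complex" where
  "word_value a w = (\<Sum>j<length w. of_int (w ! j) * a ^ j)"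

lemma finite_Lwords: "finite (Lwords a a0 k)"
proof (rule finite_subset)
  show "Lwords a a0 k \<subseteq> {xs. set xs \<subseteq> digits a0 \<and> length xs = k}" by (auto simp: Lwords_def)
  show "finite {xs. set xs \<subseteq> digits a0 \<and> length xs = k}"
    by (rule finite_lists_length_eq) (simp add: digits_def)
qed

lemma Cons_in_Lwords_SucD:
  assumes "d # w \<in> Lwords a a0 (Suc k)"
  shows "w \<in> Lwords a a0 k" "d \<in> digits a0" "of_int d + a * word_value a w \<in> Lambda a"
proof -
  from assms have "length w = k" "set (d # w) \<subseteq> digits a0"
    and tails: "\<And>l. l \<le> k \<Longrightarrow> (\<Sum>j = l..k. of_int ((d # w) ! j) * a ^ (j - l)) \<in> Lambda a"
    by (auto simp: Lwords_def)
  have "(\<Sum>j = l..k - 1. of_int (w ! j) * a ^ (j - l)) \<in> Lambda a" if "l < k" for l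
  proof -
    have "(\<Sum>j = Suc l..Suc (k - 1). of_int ((d # w) ! j) * a ^ (j - Suc l)) \<in> Lambda a"
      using tails[of "Suc l"] that by simp
    thus ?thesis by (simp only: sum.shift_bounds_cl_Suc_ivl) simp
  qed
  with \<open>length w = k\<close> \<open>set (d # w) \<subseteq> digits a0\<close> show "w \<in> Lwords a a0 k" "d \<in> digits a0"
    by (auto simp: Lwords_def)
  have "(\<Sum>j<Suc k. of_int ((d # w) ! j) * a ^ j) \<in> Lambda a"
    using tails[of 0] by (simp add: atLeast0AtMost lessThan_Suc_atMost)
  thus "of_int d + a * word_value a w \<in> Lambda a"
    unfolding word_value_def sum.lessThan_Suc_shift \<open>length w = k\<close>
    by (simp add: sum_distrib_left algebra_simps)
qed

lemma card_Lwords_Suc_le: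
  assumes "\<And>w. card {d \<in> digits a0. of_int d + a * word_value a w \<in> Lambda a} \<le> C"
  shows "card (Lwords a a0 (Suc k)) \<le> card (Lwords a a0 k) * C"
proof -
  define B where "B w = {d \<in> digits a0. of_int d + a * word_value a w \<in> Lambda a}" for w
  have finite_B: "finite (B w)" for w
    by (rule finite_subset[of _ "digits a0"]) (auto simp: B_def digits_def)
  have "Lwords a a0 (Suc k) \<subseteq> (\<lambda>(w, d). d # w) ` (SIGMA w:Lwords a a0 k. B w)"
  proof
    fix ds assume ds: "ds \<in> Lwords a a0 (Suc k)"
    then obtain d w where "ds = d # w" by (cases ds) (auto simp: Lwords_def)
    with Cons_in_Lwords_SucD[of d w] ds show "ds \<in> (\<lambda>(w, d). d # w) ` (SIGMA w:Lwords a a0 k. B w)"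
      by (force simp: B_def)
  qed
  hence "card (Lwords a a0 (Suc k)) \<le> card ((\<lambda>(w, d). d # w) ` (SIGMA w:Lwords a a0 k. B w))"
    by (intro card_mono finite_imageI finite_SigmaI finite_Lwords finite_B)
  also have "\<dots> \<le> card (SIGMA w:Lwords a a0 k. B w)"
    by (rule card_image_le) (intro finite_SigmaI finite_Lwords finite_B)
  also have "\<dots> = (\<Sum>w\<in>Lwords a a0 k. card (B w))"
    by (rule card_SigmaI) (auto intro: finite_Lwords finite_B)
  also have "\<dots> \<le> card (Lwords a a0 k) * C"
    using sum_bounded_above[of "Lwords a a0 k" "\<lambda>w. card (B w)" C] assms by (simp add: B_def)
  finally show ?thesis .
qed

lemma card_Lwords_le:
  fixes \<alpha> :: complex and a0 a1 a2 :: int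
  assumes "Im \<alpha> \<noteq> 0" "a2 > 0" "gcd a0 (gcd a1 a2) = 1"
    and "of_int a2 * \<alpha>^2 + of_int a1 * \<alpha> + of_int a0 = 0"
  shows "card (Lwords \<alpha> a0 k) \<le> nat \<lceil>real_of_int \<bar>a0\<bar> / real_of_int a2\<rceil> ^ k"
proof (induction k)
  case 0
  have "Lwords \<alpha> a0 0 = {[]}" by (auto simp: Lwords_def)
  thus ?case by simp
next
  case (Suc k)
  define C where "C = nat \<lceil>real_of_int \<bar>a0\<bar> / real_of_int a2\<rceil>"
  have "card {d \<in> digits a0. of_int d + \<alpha> * word_value \<alpha> w \<in> Lambda \<alpha>} \<le> C" for w
    unfolding C_def using Lambda_digit_diff_dvd[OF assms(1) _ assms(3,4)] assms(2)
    by (intro card_pairwise_congruent_le) (auto simp: digits_def)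
  hence "card (Lwords \<alpha> a0 (Suc k)) \<le> card (Lwords \<alpha> a0 k) * C"
    by (rule card_Lwords_Suc_le)
  also have "\<dots> \<le> C ^ k * C" using Suc.IH by (simp add: C_def)
  finally show ?case by (simp add: C_def mult.commute)
qed

theorem mainTheorem7:
  fixes \<alpha> :: complex and a0 a1 a2 :: int and k :: nat
  assumes "Re \<alpha> \<in> \<rat>" and "Im \<alpha> \<in> \<rat>" and "Im \<alpha> \<noteq> 0"
    and "norm \<alpha> > 1"
    and "gcd a0 (gcd a1 a2) = 1" and "a2 > 0"
    and "of_int a2 * \<alpha>^2 + of_int a1 * \<alpha> + of_int a0 = 0"
    and "finiteness_property \<alpha> a0"
  shows "real (card (Lwords \<alpha> a0 k)) \<le> real_of_int (\<lceil>real (card (digits a0)) / real_of_int a2\<rceil>) ^ k"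
proof -
  define c where "c = \<lceil>real_of_int \<bar>a0\<bar> / real_of_int a2\<rceil>"
  have "real (card (digits a0)) = real_of_int \<bar>a0\<bar>" by (simp add: digits_def)
  moreover have "c \<ge> 0"
    unfolding c_def using \<open>a2 > 0\<close> by (metis ceiling_mono ceiling_zero divide_nonneg_pos of_int_0_less_iff of_int_abs abs_ge_zero)
  moreover have "card (Lwords \<alpha> a0 k) \<le> nat c ^ k"
    unfolding c_def by (rule card_Lwords_le[OF assms(3,6,5,7)])
  ultimately show ?thesis
    unfolding c_def by (metis of_int_of_nat_eq of_int_power of_nat_le_iff nat_0_le of_nat_power)
qed

end
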